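(* Let $\mathbb F$ be a field of characteristic $p$, $S$ a quasi-thin scheme on $X$, $x\in X$, $\mathcal T=\mathcal T(x)$, $E_a^*=E_a^*(x)$. The following are equivalent: (i) $S$ is $p'$-valenced; (ii) $\mathcal T$ is semisimple; (iii) for every $R_a\in S$ the $\mathbb F$-algebra $E_a^*\mathcal TE_a^*=\{E_a^*ME_a^*:M\in\mathcal T\}$ (with identity $E_a^*$) is semisimple.
   Context: Let $X$ be a nonempty finite set. A scheme of class $d$ on $X$ is a partition $S=\{R_0,\dots,R_d\}$ of $X\times X$ into nonempty sets such that $R_0=\{(b,b):b\in X\}$; for each $c$ there is $c'$ with $R_{c'}=\{(f,e):(e,f)\in R_c\}$; and for all $i,j,k$ the intersection number $p_{ij}^k=|\{\ell\in X:(m,\ell)\in R_i,(\ell,n)\in R_j\}|$ does not depend on $(m,n)\in R_k$. The valency is $k_a=p_{aa'}^0$; quasi-thin means all $k_a\le 2$; $p'$-valenced means no $k_a$ is divisible by $p$ (every scheme is $0'$-valenced). For $y\in X$, $yR_a=\{z:(y,z)\in R_a\}$; $A_a\in M_X(\mathbb F)$ is the $(0,1)$ adjacency matrix of $R_a$, $E_a^*(y)$ is the diagonal $(0,1)$-matrix with ones exactly at positions indexed by $yR_a$, and $\mathcal T(y)$ is the $\mathbb F$-subalgebra of $M_X(\mathbb F)$ generated by $A_0,\dots,A_d,E_0^*(y),\dots,E_d^*(y)$. *)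

theory Defs
  imports "HOL-Analysis.Analysis"
begin

text \<open>Schemes on a finite nonempty type 'x (the set X), with relations R 0, ..., R d.\<close>

definition intersection_count ::
  "(nat \<Rightarrow> ('x \<times> 'x) set) \<Rightarrow> nat \<Rightarrow> nat \<Rightarrow> 'x \<Rightarrow> 'x \<Rightarrow> nat" where
  "intersection_count R i j m n = card {l. (m, l) \<in> R i \<and> (l, n) \<in> R j}"

definition is_scheme :: "nat \<Rightarrow> (nat \<Rightarrow> ('x::finite \<times> 'x) set) \<Rightarrow> bool" where
  "is_scheme d R \<longleftrightarrow>
     (\<forall>i\<le>d. R i \<noteq> {}) \<and>
     (\<forall>i\<le>d. \<forall>j\<le>d. i \<noteq> j \<longrightarrow> R i \<inter> R j = {}) \<and>
     (\<Union>i\<le>d. R i) = UNIV \<and>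
     R 0 = Id \<and>
     (\<forall>c\<le>d. \<exists>c'\<le>d. R c' = converse (R c)) \<and>
     (\<forall>i\<le>d. \<forall>j\<le>d. \<forall>k\<le>d. \<forall>m n m' n'. (m, n) \<in> R k \<longrightarrow> (m', n') \<in> R k \<longrightarrow>
        intersection_count R i j m n = intersection_count R i j m' n')"

definition intersection_number :: "(nat \<Rightarrow> ('x \<times> 'x) set) \<Rightarrow> nat \<Rightarrow> nat \<Rightarrow> nat \<Rightarrow> nat" where
  "intersection_number R i j k =
     (let mn = (SOME mn. mn \<in> R k) in intersection_count R i j (fst mn) (snd mn))"

definition dual_index :: "nat \<Rightarrow> (nat \<Rightarrow> ('x \<times> 'x) set) \<Rightarrow> nat \<Rightarrow> nat" where
  "dual_index d R c = (THE c'. c' \<le> d \<and> R c' = converse (R c))"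

definition valency :: "nat \<Rightarrow> (nat \<Rightarrow> ('x \<times> 'x) set) \<Rightarrow> nat \<Rightarrow> nat" where
  "valency d R a = intersection_number R a (dual_index d R a) 0"

definition quasi_thin :: "nat \<Rightarrow> (nat \<Rightarrow> ('x \<times> 'x) set) \<Rightarrow> bool" where
  "quasi_thin d R \<longleftrightarrow> (\<forall>a\<le>d. valency d R a \<le> 2)"

text \<open>p'-valenced; for p = 0 this is always true since valencies are positive.\<close>
definition p'_valenced :: "nat \<Rightarrow> nat \<Rightarrow> (nat \<Rightarrow> ('x \<times> 'x) set) \<Rightarrow> bool" where
  "p'_valenced p d R \<longleftrightarrow> (\<forall>a\<le>d. \<not> p dvd valency d R a)"

definition adj_matrix :: "(nat \<Rightarrow> ('x::finite \<times> 'x) set) \<Rightarrow> nat \<Rightarrow> 'f::field ^'x^'x" where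
  "adj_matrix R a = (\<chi> i j. if (i, j) \<in> R a then 1 else 0)"

definition dual_idem :: "(nat \<Rightarrow> ('x::finite \<times> 'x) set) \<Rightarrow> 'x \<Rightarrow> nat \<Rightarrow> 'f::field ^'x^'x" where
  "dual_idem R y a = (\<chi> i j. if i = j \<and> (y, i) \<in> R a then 1 else 0)"

definition mat_smult :: "'f::field \<Rightarrow> 'f^'x^'x \<Rightarrow> 'f^'x^'x" where
  "mat_smult c M = (\<chi> i j. c * M $ i $ j)"

inductive_set gen_subalg :: "('f::field ^'x::finite^'x) set \<Rightarrow> ('f^'x^'x) set"
  for G where
  gen: "M \<in> G \<Longrightarrow> M \<in> gen_subalg G"
| one: "mat 1 \<in> gen_subalg G"
| add: "M \<in> gen_subalg G \<Longrightarrow> N \<in> gen_subalg G \<Longrightarrow> M + N \<in> gen_subalg G"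
| smult: "M \<in> gen_subalg G \<Longrightarrow> mat_smult c M \<in> gen_subalg G"
| mult: "M \<in> gen_subalg G \<Longrightarrow> N \<in> gen_subalg G \<Longrightarrow> M ** N \<in> gen_subalg G"

definition terwilliger_alg :: "nat \<Rightarrow> (nat \<Rightarrow> ('x::finite \<times> 'x) set) \<Rightarrow> 'x \<Rightarrow> ('f::field ^'x^'x) set" where
  "terwilliger_alg d R y =
     gen_subalg ((\<lambda>a. adj_matrix R a) ` {0..d} \<union> (\<lambda>a. dual_idem R y a) ` {0..d})"

text \<open>A (not necessarily unit-preserving) F-subalgebra A of M_X(F) with identity element e.\<close>
definition unital_alg :: "('f::field ^'x::finite^'x) set \<Rightarrow> 'f^'x^'x \<Rightarrow> bool" where
  "unital_alg A e \<longleftrightarrow> e \<in> A \<and> 0 \<in> A \<and>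
     (\<forall>M\<in>A. \<forall>N\<in>A. M + N \<in> A \<and> M ** N \<in> A) \<and>
     (\<forall>c. \<forall>M\<in>A. mat_smult c M \<in> A) \<and>
     (\<forall>M\<in>A. e ** M = M \<and> M ** e = M)"

definition left_ideal :: "('f::field ^'x::finite^'x) set \<Rightarrow> ('f^'x^'x) set \<Rightarrow> bool" where
  "left_ideal A L \<longleftrightarrow> L \<subseteq> A \<and> 0 \<in> L \<and>
     (\<forall>M\<in>L. \<forall>N\<in>L. M + N \<in> L) \<and> (\<forall>M\<in>L. - M \<in> L) \<and>
     (\<forall>a\<in>A. \<forall>M\<in>L. a ** M \<in> L)"

definition maximal_left_ideal :: "('f::field ^'x::finite^'x) set \<Rightarrow> ('f^'x^'x) set \<Rightarrow> bool" where
  "maximal_left_ideal A L \<longleftrightarrow> left_ideal A L \<and> L \<noteq> A \<and>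
     (\<forall>L'. left_ideal A L' \<and> L \<subseteq> L' \<and> L' \<noteq> A \<longrightarrow> L' = L)"

definition jacobson_radical :: "('f::field ^'x::finite^'x) set \<Rightarrow> ('f^'x^'x) set" where
  "jacobson_radical A = A \<inter> \<Inter> {L. maximal_left_ideal A L}"

definition semisimple_alg :: "('f::field ^'x::finite^'x) set \<Rightarrow> 'f^'x^'x \<Rightarrow> bool" where
  "semisimple_alg A e \<longleftrightarrow> unital_alg A e \<and> jacobson_radical A = {0}"

end

theory Submission
  imports Defs
begin

(*
  Let u_b be the characteristic vector of the subconstituent xR_b. The Terwilliger
  algebra T preserves the space P of vectors constant on every subconstituent (the
  primary module, spanned by the u_b) and, being closed under transposition, also its
  orthogonal complement Q for the standard bilinear form. The Jacobson radical is the
  intersection of the maximal left ideals, and the annihilator of a vector generating a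
  simple module is such an ideal.

  If p divides the valency k_a, the matrix N = A_a' E_0* A_a = u_a u_a^T lies in T and in
  E_a* T E_a*, is nonzero, and N M N = (u_a . M u_a) N = k_a (M u_a)_y N = 0 for all M in T
  and y in xR_a; hence N lies in both radicals. Otherwise each u_b generates a simple
  T-module, and so does each difference axis y - axis z with xR_b = {y, z}; in the latter
  case one returns from another subconstituent by transposing, and needs 2 = k_b to be
  invertible. For the corner algebra E_a* T E_a* these vectors are even eigenvectors.
  By quasi-thinness they span the whole space, so both radicals vanish.
*)

section \<open>Matrix preliminaries\<close>

lemma mat_smult_mult_vec: "mat_smult c M *v v = c *s (M *v v)"
  by (simp add: mat_smult_def matrix_vector_mult_def vec_eq_iff sum_distrib_left mult.assoc)

lemma mat_smult_minus_one: "mat_smult (-1) M = - M"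
  by (simp add: mat_smult_def vec_eq_iff)

lemma mat_smult_zero: "mat_smult 0 M = 0"
  by (simp add: mat_smult_def vec_eq_iff)

lemma mat_smult_matrix_mult_left: "mat_smult c M ** N = mat_smult c (M ** N)"
  by (simp add: mat_smult_def matrix_matrix_mult_def vec_eq_iff sum_distrib_left mult.assoc)

lemma mat_smult_matrix_mult_right: "M ** mat_smult c N = mat_smult c (M ** N)"
  by (simp add: mat_smult_def matrix_matrix_mult_def vec_eq_iff sum_distrib_left mult_ac)

lemma transpose_mat_smult: "transpose (mat_smult c M) = mat_smult c (transpose M)"
  by (simp add: transpose_def mat_smult_def vec_eq_iff)

lemma transpose_add: "transpose (A + B) = transpose A + transpose B"
  by (simp add: transpose_def vec_eq_iff)

lemma matrix_add_rdistrib: "(B + C) ** A = B ** A + C ** A"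
  by (simp add: matrix_matrix_mult_def vec_eq_iff sum.distrib distrib_right)

lemma matrix_mult_uminus_left: "(- M) ** N = - (M ** (N::'a::ring_1^'n^'n))"
  by (simp add: matrix_matrix_mult_def vec_eq_iff sum_negf)

lemma matrix_diff_ldistrib: "M ** (N - K) = M ** N - M ** (K::'a::ring_1^'n^'n)"
  by (simp add: matrix_matrix_mult_def vec_eq_iff sum_subtractf right_diff_distrib)

lemma matrix_vector_mult_axis: "(M *v axis j 1) $ i = M $ i $ j"
  by (simp add: matrix_vector_mult_def axis_def if_distrib cong: if_cong)

lemma matrix_eq_0_if_axis: "(\<And>j. M *v axis j 1 = 0) \<Longrightarrow> M = 0"
  by (metis matrix_vector_mult_axis vec_eq_iff zero_index)

lemma sum_mult_matrix_vector:
  fixes M :: "'a::comm_semiring_1^'n^'n"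
  shows "(\<Sum>j\<in>UNIV. p $ j * (M *v w) $ j) = (\<Sum>j\<in>UNIV. (transpose M *v p) $ j * w $ j)"
proof -
  have "(\<Sum>j\<in>UNIV. p $ j * (M *v w) $ j) = (\<Sum>j\<in>UNIV. \<Sum>k\<in>UNIV. p $ j * M $ j $ k * w $ k)"
    by (simp add: matrix_vector_mult_def sum_distrib_left mult_ac)
  also have "\<dots> = (\<Sum>k\<in>UNIV. \<Sum>j\<in>UNIV. p $ j * M $ j $ k * w $ k)"
    by (rule sum.swap)
  also have "\<dots> = (\<Sum>j\<in>UNIV. (transpose M *v p) $ j * w $ j)"
    by (simp add: matrix_vector_mult_def transpose_def sum_distrib_left mult_ac)
  finally show ?thesis .
qed

lemma sum_mult_axis: "(\<Sum>j\<in>UNIV. p $ j * axis y c $ j) = p $ y * (c::'a::semiring_1)"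
proof -
  have "(\<Sum>j\<in>UNIV. p $ j * axis y c $ j) = (\<Sum>j\<in>UNIV. if j = y then p $ j * c else 0)"
    by (intro sum.cong) (auto simp: axis_def)
  then show ?thesis by simp
qed

lemma sum_mult_axis_diff:
  fixes p :: "'a::comm_ring_1^'n"
  shows "(\<Sum>j\<in>UNIV. p $ j * (axis y 1 - axis z 1) $ j) = p $ y - p $ z"
  by (simp add: right_diff_distrib sum_subtractf sum_mult_axis)

lemma sum_axis_diff_square:
  fixes i i' :: "'n::finite"
  assumes "i \<noteq> i'"
  shows "(\<Sum>j\<in>UNIV. (axis i 1 - axis i' 1) $ j * (axis i 1 - axis i' 1) $ j) = (2::'a::comm_ring_1)"
  by (subst sum_mult_axis_diff) (use assms in \<open>simp add: axis_def\<close>)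

lemma sum_mult_smult_self:
  "(\<Sum>j\<in>UNIV. r $ j * (c *s r) $ j) = c * (\<Sum>j\<in>UNIV. r $ j * r $ j :: 'a::comm_ring_1)"
  by (simp only: vector_smult_component sum_distrib_left mult.left_commute)

lemma sum_constant_eq_if_card_eq:
  fixes f :: "'a \<Rightarrow> 'b::semiring_1"
  assumes "finite C" "S \<subseteq> C" "S' \<subseteq> C" "card S = card S'"
    and const: "\<And>i j. i \<in> C \<Longrightarrow> j \<in> C \<Longrightarrow> f i = f j"
  shows "sum f S = sum f S'"
proof (cases "S = {}")
  case False
  then obtain s where "s \<in> S" by blast
  have "sum f T = of_nat (card T) * f s" if "T \<subseteq> C" for T
  proof -
    have "sum f T = sum (\<lambda>_. f s) T"
      using const \<open>s \<in> S\<close> assms(2) that by (intro sum.cong) auto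
    then show ?thesis by simp
  qed
  then show ?thesis using assms(2-4) by simp
qed (use assms in \<open>metis card_0_eq finite_subset\<close>)

lemma finite_set_card_le_2_cases:
  assumes "finite C" "y \<in> C" "card C \<le> 2"
  obtains "C = {y}" | z where "z \<noteq> y" "C = {y, z}"
proof -
  have "card C = 1 \<or> card C = 2"
    using assms card_0_eq[of C] by fastforce
  then show thesis
  proof
    assume "card C = 1"
    then show thesis using that(1) assms(2) by (metis card_1_singletonE singletonD)
  next
    assume "card C = 2"
    then obtain p q where "p \<noteq> q" "C = {p, q}" by (metis card_2_iff)
    then show thesis using that(2) assms(2) by (metis insert_commute insert_iff singletonD)
  qed
qed

lemma unital_alg_gen_subalg: "unital_alg (gen_subalg G) (mat 1)"
proof -
  have "0 \<in> gen_subalg G"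
    using gen_subalg.smult[OF gen_subalg.one, where c=0] by (simp add: mat_smult_zero)
  then show ?thesis unfolding unital_alg_def by (auto intro: gen_subalg.intros)
qed

lemma gen_subalg_invariant:
  assumes "M \<in> gen_subalg G" "P v"
    and gen: "\<And>N v. N \<in> G \<Longrightarrow> P v \<Longrightarrow> P (N *v v)"
    and add: "\<And>v w. P v \<Longrightarrow> P w \<Longrightarrow> P (v + w)"
    and smult: "\<And>c v. P v \<Longrightarrow> P (c *s v)"
  shows "P (M *v v)"
  using assms(1,2)
proof (induction arbitrary: v)
  case (mult M N)
  then show ?case by (simp add: matrix_vector_mul_assoc[symmetric])
qed (simp_all add: gen add smult matrix_vector_mult_add_rdistrib mat_smult_mult_vec)

lemma transpose_gen_subalg:
  assumes "M \<in> gen_subalg G" and "\<And>N. N \<in> G \<Longrightarrow> transpose N \<in> G"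
  shows "transpose M \<in> gen_subalg G"
  using assms(1)
  by induction
    (simp_all add: assms(2) gen_subalg.intros transpose_add transpose_mat_smult matrix_transpose_mul)

section \<open>The Jacobson radical\<close>

lemma unital_algD:
  assumes "unital_alg A e"
  shows "e \<in> A" "0 \<in> A" "M \<in> A \<Longrightarrow> N \<in> A \<Longrightarrow> M + N \<in> A" "M \<in> A \<Longrightarrow> N \<in> A \<Longrightarrow> M ** N \<in> A"
    "M \<in> A \<Longrightarrow> mat_smult c M \<in> A" "M \<in> A \<Longrightarrow> - M \<in> A"
    "M \<in> A \<Longrightarrow> e ** M = M" "M \<in> A \<Longrightarrow> M ** e = M"
  using assms mat_smult_minus_one[of M] unfolding unital_alg_def by metis+

lemma left_idealD:
  assumes "left_ideal A L"
  shows "L \<subseteq> A" "0 \<in> L" "M \<in> L \<Longrightarrow> N \<in> L \<Longrightarrow> M + N \<in> L" "M \<in> L \<Longrightarrow> - M \<in> L"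
    "a \<in> A \<Longrightarrow> M \<in> L \<Longrightarrow> a ** M \<in> L"
  using assms unfolding left_ideal_def by auto

lemma left_ideal_eq_if_identity:
  assumes alg: "unital_alg A e" and L: "left_ideal A L" and "e \<in> L"
  shows "L = A"
proof (rule subset_antisym)
  show "L \<subseteq> A" using left_idealD(1)[OF L] .
  show "A \<subseteq> L"
  proof
    fix M assume "M \<in> A"
    then have "M ** e \<in> L" using left_idealD(5)[OF L] \<open>e \<in> L\<close> by blast
    then show "M \<in> L" using unital_algD(8)[OF alg \<open>M \<in> A\<close>] by simp
  qed
qed

lemma left_ideal_add_left_multiples:
  assumes alg: "unital_alg A e" and "left_ideal A L" and "n \<in> A"
  shows "left_ideal A {l + a ** n | l a. l \<in> L \<and> a \<in> A}" (is "left_ideal A ?L'")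
proof -
  note A = unital_algD[OF alg] and L = left_idealD[OF assms(2)]
  have L'I: "l + a ** n \<in> ?L'" if "l \<in> L" "a \<in> A" for l a
    using that by blast
  show ?thesis
    unfolding left_ideal_def
  proof (intro conjI ballI)
    show "?L' \<subseteq> A" using L(1) A(3,4) \<open>n \<in> A\<close> by blast
    show "0 \<in> ?L'" using L'I[OF L(2) A(2)] by simp
  next
    fix M N assume "M \<in> ?L'" "N \<in> ?L'"
    then obtain l a l' a' where "M = l + a ** n" "N = l' + a' ** n" "l \<in> L" "l' \<in> L" "a \<in> A" "a' \<in> A"
      by blast
    then show "M + N \<in> ?L'"
      using L'I[OF L(3) A(3), of l l' a a'] by (simp add: matrix_add_rdistrib add_ac)
  next
    fix M assume "M \<in> ?L'"
    then obtain l a where "M = l + a ** n" "l \<in> L" "a \<in> A" by blast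
    then show "- M \<in> ?L'"
      using L'I[OF L(4) A(6), of l a] by (simp add: matrix_mult_uminus_left)
  next
    fix b M assume "b \<in> A" "M \<in> ?L'"
    then obtain l a where "M = l + a ** n" "l \<in> L" "a \<in> A" by blast
    then show "b ** M \<in> ?L'"
      using L'I[OF L(5) A(4), of b l b a] \<open>b \<in> A\<close> by (simp add: matrix_add_ldistrib matrix_mul_assoc)
  qed
qed

lemma jacobson_radical_if_nil:
  assumes alg: "unital_alg A e" and "n \<in> A" and nil: "\<forall>a\<in>A. n ** a ** n = 0"
  shows "n \<in> jacobson_radical A"
proof -
  note A = unital_algD[OF alg]
  have "n \<in> L" if max: "maximal_left_ideal A L" for L
  proof (rule ccontr)
    assume "n \<notin> L"
    have "left_ideal A L" "L \<noteq> A"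
      using max unfolding maximal_left_ideal_def by blast+
    note L = left_idealD[OF this(1)]
    let ?L' = "{l + a ** n | l a. l \<in> L \<and> a \<in> A}"
    have "L \<subseteq> ?L'" using A(2) by force
    moreover have "n \<in> ?L'" using L(2) A(1) A(7)[OF \<open>n \<in> A\<close>] by force
    ultimately have "?L' = A"
      using max left_ideal_add_left_multiples[OF alg \<open>left_ideal A L\<close> \<open>n \<in> A\<close>] \<open>n \<notin> L\<close>
      unfolding maximal_left_ideal_def by blast
    then obtain l a where "l \<in> L" "a \<in> A" and e: "e = l + a ** n"
      using A(1) by blast
    have an: "a ** n \<in> A" using A(4) \<open>a \<in> A\<close> \<open>n \<in> A\<close> .
    have "(a ** n) ** (a ** n) = a ** (n ** a ** n)"
      by (simp add: matrix_mul_assoc)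
    also have "\<dots> = 0" using nil \<open>a \<in> A\<close> by simp
    finally have an_sq: "(a ** n) ** (a ** n) = 0" .
    txt \<open>So \<open>l = e - a n\<close> is a unit with inverse \<open>e + a n\<close>.\<close>
    have "(e + a ** n) ** l = (e + a ** n) ** (e - a ** n)"
      using e by simp
    also have "\<dots> = (e ** e + a ** n ** e) - (e ** (a ** n) + a ** n ** (a ** n))"
      by (simp add: matrix_diff_ldistrib matrix_add_rdistrib)
    also have "\<dots> = e" by (simp add: an_sq A(1,7,8) an)
    finally have "e = (e + a ** n) ** l" ..
    then have "e \<in> L" using L(5)[OF A(3)[OF A(1) an] \<open>l \<in> L\<close>] by simp
    then show False using left_ideal_eq_if_identity[OF alg] \<open>left_ideal A L\<close> \<open>L \<noteq> A\<close> by blast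
  qed
  then show ?thesis unfolding jacobson_radical_def using \<open>n \<in> A\<close> by blast
qed

lemma not_semisimple_if_nil:
  assumes "n \<in> A" "n \<noteq> 0" "\<forall>a\<in>A. n ** a ** n = 0"
  shows "\<not> semisimple_alg A e"
  using jacobson_radical_if_nil[of A e n] assms unfolding semisimple_alg_def by blast

text \<open>Every nonzero vector of \<open>A s\<close> generates \<open>s\<close> back, i.e. \<open>A s\<close> is a simple \<open>A\<close>-module.\<close>
definition simple_generator :: "('f::field^'x::finite^'x) set \<Rightarrow> 'f^'x \<Rightarrow> bool" where
  "simple_generator A s \<longleftrightarrow> (\<forall>M\<in>A. M *v s \<noteq> 0 \<longrightarrow> (\<exists>N\<in>A. N *v (M *v s) = s))"

lemma jacobson_radical_annihilates_simple_generator: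
  assumes alg: "unital_alg A e" and "e *v s = s" and gen: "simple_generator A s"
    and "M \<in> jacobson_radical A"
  shows "M *v s = 0"
proof (cases "s = 0")
  case False
  note A = unital_algD[OF alg]
  define L where "L = {M \<in> A. M *v s = 0}"
  have L: "left_ideal A L"
    unfolding left_ideal_def L_def
    using A(2,3,4,6) by (auto simp: matrix_vector_mult_add_rdistrib matrix_vector_mul_assoc[symmetric]
        mat_smult_minus_one[symmetric] mat_smult_mult_vec)
  have "e \<notin> L" using \<open>e *v s = s\<close> False unfolding L_def by simp
  then have "L \<noteq> A" using A(1) by blast
  moreover have "L' = L" if L'_ideal: "left_ideal A L'" and "L \<subseteq> L'" "L' \<noteq> A" for L'
  proof (rule ccontr)
    note L' = left_idealD[OF L'_ideal]
    assume "L' \<noteq> L"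
    then obtain K where "K \<in> L'" "K \<notin> L" using \<open>L \<subseteq> L'\<close> by blast
    then have "K \<in> A" "K *v s \<noteq> 0" using L'(1) unfolding L_def by auto
    then obtain N where "N \<in> A" and NK: "N *v (K *v s) = s"
      using gen unfolding simple_generator_def by blast
    have "N ** K \<in> A" using A(4) \<open>N \<in> A\<close> \<open>K \<in> A\<close> .
    then have "e - N ** K \<in> A" using A(1,3,6) by (metis diff_conv_add_uminus)
    moreover have "(e - N ** K) *v s = 0"
      using NK \<open>e *v s = s\<close> by (simp add: matrix_vector_mult_diff_rdistrib matrix_vector_mul_assoc[symmetric])
    ultimately have "e - N ** K \<in> L" unfolding L_def by blast
    moreover have "N ** K \<in> L'" using L'(5) \<open>N \<in> A\<close> \<open>K \<in> L'\<close> .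
    ultimately have "(e - N ** K) + N ** K \<in> L'" using L'(3) \<open>L \<subseteq> L'\<close> by blast
    then show False using left_ideal_eq_if_identity[OF alg L'_ideal] \<open>L' \<noteq> A\<close> by simp
  qed
  ultimately have "maximal_left_ideal A L" using L unfolding maximal_left_ideal_def by blast
  then show ?thesis using assms(4) unfolding jacobson_radical_def L_def by blast
qed simp

lemma simple_generatorI:
  assumes alg: "unital_alg A e"
    and scaled: "\<And>M. M \<in> A \<Longrightarrow> M *v s \<noteq> 0 \<Longrightarrow> \<exists>N\<in>A. \<exists>c. c \<noteq> 0 \<and> N *v (M *v s) = c *s s"
  shows "simple_generator A s"
  unfolding simple_generator_def
proof (intro ballI impI)
  fix M assume "M \<in> A" "M *v s \<noteq> 0"
  then obtain N c where "N \<in> A" "c \<noteq> 0" and N: "N *v (M *v s) = c *s s" using scaled by blast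
  have "mat_smult (inverse c) N *v (M *v s) = s"
    using \<open>c \<noteq> 0\<close> by (simp add: mat_smult_mult_vec N)
  moreover have "mat_smult (inverse c) N \<in> A" using unital_algD(5)[OF alg \<open>N \<in> A\<close>] .
  ultimately show "\<exists>N\<in>A. N *v (M *v s) = s" by blast
qed

lemma simple_generator_if_eigenvector:
  assumes alg: "unital_alg A e" and "e *v s = s" and eigen: "\<And>M. M \<in> A \<Longrightarrow> \<exists>c. M *v s = c *s s"
  shows "simple_generator A s"
proof (rule simple_generatorI[OF alg])
  fix M assume "M \<in> A" "M *v s \<noteq> 0"
  moreover obtain c where "M *v s = c *s s" using eigen \<open>M \<in> A\<close> by blast
  ultimately have "c \<noteq> 0" "e *v (M *v s) = c *s s"
    using \<open>e *v s = s\<close> by (auto simp: vector_scalar_commute)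
  then show "\<exists>N\<in>A. \<exists>c. c \<noteq> 0 \<and> N *v (M *v s) = c *s s" using unital_algD(1)[OF alg] by blast
qed

lemma jacobson_radical_annihilates_eigenvector:
  assumes "unital_alg A e" "e *v s = s" "\<And>N. N \<in> A \<Longrightarrow> \<exists>c. N *v s = c *s s"
    and "M \<in> jacobson_radical A"
  shows "M *v s = 0"
  using jacobson_radical_annihilates_simple_generator[OF assms(1,2)
      simple_generator_if_eigenvector[OF assms(1-3)] assms(4)] .

lemma semisimple_algI:
  assumes "unital_alg A e" and "\<And>M. M \<in> jacobson_radical A \<Longrightarrow> M = 0"
  shows "semisimple_alg A e"
proof -
  have "0 \<in> jacobson_radical A"
    using unital_algD(2)[OF assms(1)]
    by (simp add: jacobson_radical_def maximal_left_ideal_def left_ideal_def)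
  then show ?thesis using assms unfolding semisimple_alg_def by blast
qed

section \<open>Corner algebras\<close>

definition corner :: "('f::field^'x::finite^'x) set \<Rightarrow> 'f^'x^'x \<Rightarrow> ('f^'x^'x) set" where
  "corner A e = {e ** M ** e | M. M \<in> A}"

lemma cornerI: "M \<in> A \<Longrightarrow> e ** M ** e \<in> corner A e"
  unfolding corner_def by blast

lemma cornerE:
  assumes "M \<in> corner A e"
  obtains M' where "M' \<in> A" "M = e ** M' ** e"
  using assms unfolding corner_def by blast

lemma corner_subset:
  assumes "unital_alg A u" "e \<in> A"
  shows "corner A e \<subseteq> A"
  using unital_algD(4)[OF assms(1)] assms(2) by (blast elim: cornerE)

lemma unital_alg_corner:
  fixes A :: "('f::field^'x::finite^'x) set"
  assumes alg: "unital_alg A u" and "e \<in> A" and idem: "e ** e = e"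
  shows "unital_alg (corner A e) e"
proof -
  note A = unital_algD[OF alg]
  have ee: "X ** e ** e = X ** e" for X :: "'f^'x^'x" by (metis idem matrix_mul_assoc)
  have "e ** u ** e \<in> corner A e" by (rule cornerI[OF A(1)])
  moreover have "e ** u ** e = e" using A(8)[OF \<open>e \<in> A\<close>] idem by simp
  moreover have "e ** 0 ** e \<in> corner A e" by (rule cornerI[OF A(2)])
  moreover have "M + N \<in> corner A e" "M ** N \<in> corner A e"
    if "M \<in> corner A e" "N \<in> corner A e" for M N
  proof -
    obtain M' N' where "M' \<in> A" "N' \<in> A" and MN: "M = e ** M' ** e" "N = e ** N' ** e"
      using \<open>M \<in> corner A e\<close> \<open>N \<in> corner A e\<close> by (metis cornerE)
    have "M + N = e ** (M' + N') ** e"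
      by (simp add: MN matrix_add_ldistrib matrix_add_rdistrib)
    then show "M + N \<in> corner A e" using cornerI[OF A(3)[OF \<open>M' \<in> A\<close> \<open>N' \<in> A\<close>]] by simp
    have "M ** N = e ** (M' ** e ** N') ** e"
      by (simp add: MN matrix_mul_assoc ee)
    then show "M ** N \<in> corner A e"
      using cornerI[OF A(4)[OF A(4)[OF \<open>M' \<in> A\<close> \<open>e \<in> A\<close>] \<open>N' \<in> A\<close>]] by simp
  qed
  moreover have "mat_smult c M \<in> corner A e" "e ** M = M" "M ** e = M"
    if "M \<in> corner A e" for c M
  proof -
    obtain M' where "M' \<in> A" and M: "M = e ** M' ** e" using \<open>M \<in> corner A e\<close> by (rule cornerE)
    have "mat_smult c M = e ** mat_smult c M' ** e"
      by (simp add: M mat_smult_matrix_mult_left mat_smult_matrix_mult_right)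
    then show "mat_smult c M \<in> corner A e" using cornerI[OF A(5)[OF \<open>M' \<in> A\<close>]] by simp
    show "e ** M = M" "M ** e = M" by (simp_all add: M matrix_mul_assoc idem ee)
  qed
  ultimately show ?thesis unfolding unital_alg_def by simp
qed

locale based_scheme =
  fixes d :: nat and R :: "nat \<Rightarrow> ('x::finite \<times> 'x) set" and x :: 'x
  assumes scheme: "is_scheme d R"
begin

lemma relation_exists: "\<exists>i\<le>d. p \<in> R i"
proof -
  have "(\<Union>i\<le>d. R i) = UNIV" using scheme unfolding is_scheme_def by (elim conjE)
  then show ?thesis by blast
qed

lemma relation_unique: "i \<le> d \<Longrightarrow> j \<le> d \<Longrightarrow> p \<in> R i \<Longrightarrow> p \<in> R j \<Longrightarrow> i = j"
proof -
  have "\<forall>i\<le>d. \<forall>j\<le>d. i \<noteq> j \<longrightarrow> R i \<inter> R j = {}"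
    using scheme unfolding is_scheme_def by (elim conjE)
  then show "i \<le> d \<Longrightarrow> j \<le> d \<Longrightarrow> p \<in> R i \<Longrightarrow> p \<in> R j \<Longrightarrow> i = j" by blast
qed

lemma relation_nonempty: "i \<le> d \<Longrightarrow> R i \<noteq> {}"
proof -
  have "\<forall>i\<le>d. R i \<noteq> {}" using scheme unfolding is_scheme_def by (elim conjE)
  then show "i \<le> d \<Longrightarrow> R i \<noteq> {}" by blast
qed

lemma relation_0: "R 0 = Id"
  using scheme unfolding is_scheme_def by (elim conjE)

lemma converse_relation_exists: "c \<le> d \<Longrightarrow> \<exists>c'\<le>d. R c' = converse (R c)"
proof -
  have "\<forall>c\<le>d. \<exists>c'\<le>d. R c' = converse (R c)" using scheme unfolding is_scheme_def by (elim conjE)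
  then show "c \<le> d \<Longrightarrow> \<exists>c'\<le>d. R c' = converse (R c)" by blast
qed

lemma intersection_count_regular:
  assumes "i \<le> d" "j \<le> d" "k \<le> d" "(m, n) \<in> R k" "(m', n') \<in> R k"
  shows "intersection_count R i j m n = intersection_count R i j m' n'"
proof -
  have "\<forall>i\<le>d. \<forall>j\<le>d. \<forall>k\<le>d. \<forall>m n m' n'. (m, n) \<in> R k \<longrightarrow> (m', n') \<in> R k \<longrightarrow>
      intersection_count R i j m n = intersection_count R i j m' n'"
    using scheme unfolding is_scheme_def by (elim conjE)
  then show ?thesis using assms by blast
qed

lemma dual_index:
  assumes "c \<le> d"
  shows "dual_index d R c \<le> d" "R (dual_index d R c) = converse (R c)"
proof -
  obtain c' where c': "c' \<le> d" "R c' = converse (R c)"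
    using converse_relation_exists[OF assms] by blast
  have "c'' = c'" if "c'' \<le> d" "R c'' = converse (R c)" for c''
    using relation_nonempty[OF c'(1)] relation_unique[OF that(1) c'(1)] that(2) c'(2) by auto
  then have "\<exists>!c'. c' \<le> d \<and> R c' = converse (R c)" using c' by blast
  then show "dual_index d R c \<le> d" "R (dual_index d R c) = converse (R c)"
    unfolding dual_index_def by (metis (mono_tags, lifting) theI')+
qed

definition rel_index :: "'x \<Rightarrow> nat" where
  "rel_index y = (THE b. b \<le> d \<and> (x, y) \<in> R b)"

lemma rel_index: "rel_index y \<le> d" "(x, y) \<in> R (rel_index y)"
proof -
  have "\<exists>!b. b \<le> d \<and> (x, y) \<in> R b" using relation_exists relation_unique by blast
  then show "rel_index y \<le> d" "(x, y) \<in> R (rel_index y)"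
    unfolding rel_index_def by (metis (mono_tags, lifting) theI')+
qed

lemma rel_index_eq_iff: "b \<le> d \<Longrightarrow> rel_index y = b \<longleftrightarrow> (x, y) \<in> R b"
  using rel_index relation_unique by blast

definition subconstituent :: "nat \<Rightarrow> 'x set" where
  "subconstituent b = {y. rel_index y = b}"

lemma mem_subconstituent: "y \<in> subconstituent b \<longleftrightarrow> rel_index y = b"
  unfolding subconstituent_def by simp

lemma card_subconstituent_eq_intersection_count:
  assumes "b \<le> d"
  shows "intersection_count R b (dual_index d R b) m m = card (subconstituent b)"
proof -
  have "intersection_count R b (dual_index d R b) m m = intersection_count R b (dual_index d R b) x x"
    using intersection_count_regular[OF assms dual_index(1)[OF assms], of 0] relation_0 by simp
  also have "\<dots> = card {l. (x, l) \<in> R b \<and> (l, x) \<in> R (dual_index d R b)}"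
    unfolding intersection_count_def ..
  also have "{l. (x, l) \<in> R b \<and> (l, x) \<in> R (dual_index d R b)} = subconstituent b"
    using dual_index(2)[OF assms] rel_index_eq_iff[OF assms] unfolding subconstituent_def by auto
  finally show ?thesis .
qed

lemma valency_eq_card_subconstituent:
  assumes "b \<le> d"
  shows "valency d R b = card (subconstituent b)"
proof -
  have "(SOME mn. mn \<in> R 0) \<in> R 0" using relation_0 by (metis IdI someI)
  then obtain m where "(SOME mn. mn \<in> R 0) = (m, m)" using relation_0 by auto
  then show ?thesis
    unfolding valency_def intersection_number_def
    using card_subconstituent_eq_intersection_count[OF assms] by simp
qed

lemma subconstituent_nonempty:
  assumes "b \<le> d"
  shows "subconstituent b \<noteq> {}"
proof -
  obtain m n where "(m, n) \<in> R b" using relation_nonempty[OF assms] by auto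
  then have "n \<in> {l. (m, l) \<in> R b \<and> (l, m) \<in> R (dual_index d R b)}"
    using dual_index(2)[OF assms] by simp
  then have "intersection_count R b (dual_index d R b) m m \<noteq> 0"
    unfolding intersection_count_def by (metis card_0_eq empty_iff finite)
  then show ?thesis
    using card_subconstituent_eq_intersection_count[OF assms] by (metis card.empty)
qed

lemma card_neighbours_in_subconstituent:
  assumes "b \<le> d" "c \<le> d"
  shows "card {j. (i, j) \<in> R c \<and> rel_index j = b} = intersection_count R b (dual_index d R c) x i"
proof -
  have "{j. (i, j) \<in> R c \<and> rel_index j = b} = {l. (x, l) \<in> R b \<and> (l, i) \<in> R (dual_index d R c)}"
    using dual_index(2)[OF assms(2)] rel_index_eq_iff[OF assms(1)] by auto
  then show ?thesis unfolding intersection_count_def by simp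
qed

subsection \<open>The Terwilliger algebra and its invariant subspaces\<close>

definition subconstituent_constant :: "'f::field^'x \<Rightarrow> bool" where
  "subconstituent_constant f \<longleftrightarrow> (\<forall>i j. rel_index i = rel_index j \<longrightarrow> f $ i = f $ j)"

definition orthogonal_to_constants :: "'f::field^'x \<Rightarrow> bool" where
  "orthogonal_to_constants f \<longleftrightarrow>
     (\<forall>p. subconstituent_constant p \<longrightarrow> (\<Sum>j\<in>UNIV. p $ j * f $ j) = 0)"

definition subconstituent_vec :: "nat \<Rightarrow> 'f::field^'x" where
  "subconstituent_vec b = (\<chi> i. if rel_index i = b then 1 else 0)"

abbreviation Ter :: "('f::field^'x^'x) set" where
  "Ter \<equiv> terwilliger_alg d R x"

lemma adj_matrix_in_Ter: "c \<le> d \<Longrightarrow> adj_matrix R c \<in> Ter"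
  unfolding terwilliger_alg_def by (rule gen_subalg.gen) simp

lemma dual_idem_in_Ter: "b \<le> d \<Longrightarrow> dual_idem R x b \<in> Ter"
  unfolding terwilliger_alg_def by (rule gen_subalg.gen) simp

lemma unital_alg_Ter: "unital_alg Ter (mat 1)"
  unfolding terwilliger_alg_def by (rule unital_alg_gen_subalg)

lemma adj_matrix_mult_vec: "(adj_matrix R c *v f) $ i = (\<Sum>j | (i, j) \<in> R c. f $ j)"
  unfolding matrix_vector_mult_def adj_matrix_def
  by (simp add: if_distrib if_distribR sum.inter_filter[symmetric] cong: if_cong)

lemma dual_idem_mult_vec:
  "b \<le> d \<Longrightarrow> (dual_idem R x b *v f) $ i = (if rel_index i = b then f $ i else 0)"
  unfolding matrix_vector_mult_def dual_idem_def
  by (simp add: if_distrib if_distribR rel_index_eq_iff cong: if_cong)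

lemma dual_idem_mult_subconstituent_vec:
  "a \<le> d \<Longrightarrow> dual_idem R x a *v subconstituent_vec b = (if b = a then subconstituent_vec b else 0)"
  by (auto simp: vec_eq_iff dual_idem_mult_vec subconstituent_vec_def)

lemma dual_idem_mult_axis_diff:
  assumes "a \<le> d" "rel_index y = b" "rel_index z = b"
  shows "dual_idem R x a *v (axis y 1 - axis z 1) = (if b = a then axis y 1 - axis z 1 else 0)"
  using assms by (auto simp: vec_eq_iff dual_idem_mult_vec axis_def)

lemma dual_idem_0_mult_vec: "dual_idem R x 0 *v w = w $ x *s (axis x 1 :: 'f::field^'x)"
proof -
  have "rel_index i = 0 \<longleftrightarrow> i = x" for i
    using rel_index_eq_iff[of 0 i] relation_0 by auto
  then show ?thesis by (auto simp: vec_eq_iff dual_idem_mult_vec axis_def)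
qed

lemma dual_idem_idem: "b \<le> d \<Longrightarrow> dual_idem R x b ** dual_idem R x b = (dual_idem R x b :: 'f::field^'x^'x)"
  by (simp add: matrix_eq matrix_vector_mul_assoc[symmetric] vec_eq_iff dual_idem_mult_vec)

lemma transpose_adj_matrix: "c \<le> d \<Longrightarrow> transpose (adj_matrix R c) = adj_matrix R (dual_index d R c)"
  using dual_index(2) unfolding adj_matrix_def transpose_def by (auto simp: vec_eq_iff)

lemma transpose_dual_idem: "transpose (dual_idem R x b) = dual_idem R x b"
  unfolding dual_idem_def transpose_def by (auto simp: vec_eq_iff)

lemma transpose_in_Ter: "M \<in> Ter \<Longrightarrow> transpose M \<in> Ter"
  unfolding terwilliger_alg_def
  by (erule transpose_gen_subalg)
    (auto simp: transpose_adj_matrix transpose_dual_idem dual_index(1))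

lemma subconstituent_constantD:
  "subconstituent_constant f \<Longrightarrow> rel_index i = rel_index j \<Longrightarrow> f $ i = f $ j"
  unfolding subconstituent_constant_def by blast

lemma adj_matrix_subconstituent_constant:
  assumes "c \<le> d" and f: "subconstituent_constant f"
  shows "subconstituent_constant (adj_matrix R c *v f)"
  unfolding subconstituent_constant_def
proof (intro allI impI)
  fix i i' assume "rel_index i = rel_index i'"
  define N where "N i b = {j. j \<in> {j. (i, j) \<in> R c} \<and> rel_index j = b}" for i b
  have split: "(adj_matrix R c *v f) $ i = (\<Sum>b\<le>d. sum (\<lambda>j. f $ j) (N i b))" for i
    unfolding adj_matrix_mult_vec N_def
    by (rule sum.group[symmetric]) (use rel_index(1) in auto)
  have card: "card (N i b) = card (N i' b)" if "b \<le> d" for b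
  proof -
    have "(x, i') \<in> R (rel_index i)" using rel_index(2)[of i'] \<open>rel_index i = rel_index i'\<close> by simp
    then have "intersection_count R b (dual_index d R c) x i = intersection_count R b (dual_index d R c) x i'"
      using intersection_count_regular[OF that dual_index(1)[OF assms(1)] rel_index(1) rel_index(2)] by blast
    then show ?thesis using card_neighbours_in_subconstituent[OF that assms(1)] unfolding N_def by simp
  qed
  have sub: "N i b \<subseteq> subconstituent b" "N i' b \<subseteq> subconstituent b" for b
    unfolding N_def subconstituent_def by auto
  have const: "f $ j = f $ j'" if "j \<in> subconstituent b" "j' \<in> subconstituent b" for b j j'
    using f that unfolding subconstituent_constant_def subconstituent_def by simp
  have "sum (\<lambda>j. f $ j) (N i b) = sum (\<lambda>j. f $ j) (N i' b)" if "b \<le> d" for b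
    by (rule sum_constant_eq_if_card_eq[of "subconstituent b" _ _ "\<lambda>j. f $ j", OF finite sub card[OF that] const])
  then show "(adj_matrix R c *v f) $ i = (adj_matrix R c *v f) $ i'"
    unfolding split by simp
qed

lemma dual_idem_subconstituent_constant:
  assumes "b \<le> d" "subconstituent_constant f"
  shows "subconstituent_constant (dual_idem R x b *v f)"
  unfolding subconstituent_constant_def
proof (intro allI impI)
  fix i j assume ij: "rel_index i = rel_index j"
  then have "f $ i = f $ j" by (rule subconstituent_constantD[OF assms(2)])
  then show "(dual_idem R x b *v f) $ i = (dual_idem R x b *v f) $ j"
    by (simp add: dual_idem_mult_vec[OF assms(1)] ij)
qed

lemma Ter_subconstituent_constant:
  fixes M :: "'f::field^'x^'x"
  shows "M \<in> Ter \<Longrightarrow> subconstituent_constant f \<Longrightarrow> subconstituent_constant (M *v f)"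
  unfolding terwilliger_alg_def
proof (erule gen_subalg_invariant)
  fix N :: "'f::field^'x^'x" and v :: "'f^'x"
  assume "N \<in> adj_matrix R ` {0..d} \<union> dual_idem R x ` {0..d}" "subconstituent_constant v"
  then show "subconstituent_constant (N *v v)"
    using adj_matrix_subconstituent_constant dual_idem_subconstituent_constant by auto
next
  fix v w :: "'f^'x" and c :: 'f
  assume "subconstituent_constant v" "subconstituent_constant w"
  then show "subconstituent_constant (v + w)"
    unfolding subconstituent_constant_def by (metis vector_add_component)
  from \<open>subconstituent_constant v\<close> show "subconstituent_constant (c *s v)"
    unfolding subconstituent_constant_def by (metis vector_smult_component)
qed

lemma Ter_orthogonal_to_constants:
  fixes M :: "'f::field^'x^'x"
  assumes "M \<in> Ter" "orthogonal_to_constants f"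
  shows "orthogonal_to_constants (M *v f)"
  unfolding orthogonal_to_constants_def
proof (intro allI impI)
  fix p :: "'f::field^'x" assume "subconstituent_constant p"
  then have "subconstituent_constant (transpose M *v p)"
    using Ter_subconstituent_constant transpose_in_Ter assms(1) by blast
  then show "(\<Sum>j\<in>UNIV. p $ j * (M *v f) $ j) = 0"
    using assms(2) unfolding sum_mult_matrix_vector orthogonal_to_constants_def by blast
qed

lemma subconstituent_vec_constant: "subconstituent_constant (subconstituent_vec b)"
  unfolding subconstituent_constant_def subconstituent_vec_def by simp

lemma axis_diff_orthogonal:
  assumes "rel_index y = rel_index z"
  shows "orthogonal_to_constants (axis y 1 - axis z 1)"
  unfolding orthogonal_to_constants_def
proof (intro allI impI)
  fix p :: "'f::field^'x" assume "subconstituent_constant p"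
  then have "p $ y = p $ z" using assms by (rule subconstituent_constantD)
  then show "(\<Sum>j\<in>UNIV. p $ j * (axis y 1 - axis z 1) $ j) = 0"
    unfolding sum_mult_axis_diff by simp
qed

lemma sum_subconstituent_orthogonal:
  assumes "orthogonal_to_constants w"
  shows "(\<Sum>j\<in>subconstituent b. w $ j) = 0"
proof -
  have "(\<Sum>j\<in>subconstituent b. w $ j) = (\<Sum>j\<in>UNIV. if j \<in> subconstituent b then w $ j else 0)"
    by (simp add: sum.If_cases)
  also have "\<dots> = (\<Sum>j\<in>UNIV. subconstituent_vec b $ j * w $ j)"
    by (intro sum.cong) (auto simp: subconstituent_vec_def subconstituent_def)
  also have "\<dots> = 0"
    using assms subconstituent_vec_constant unfolding orthogonal_to_constants_def by blast
  finally show ?thesis .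
qed

lemma sum_subconstituent_constant:
  assumes "subconstituent_constant w" "rel_index i = b"
  shows "(\<Sum>j\<in>subconstituent b. w $ j) = of_nat (card (subconstituent b)) * w $ i"
proof -
  have "(\<Sum>j\<in>subconstituent b. w $ j) = (\<Sum>j\<in>subconstituent b. w $ i)"
  proof (rule sum.cong)
    fix j assume "j \<in> subconstituent b"
    then show "w $ j = w $ i"
      using assms(2) unfolding subconstituent_def by (intro subconstituent_constantD[OF assms(1)]) simp
  qed simp
  then show ?thesis by (simp only: sum_constant)
qed

lemma constant_supported_eq:
  assumes "subconstituent_constant w" "\<And>j. rel_index j \<noteq> a \<Longrightarrow> w $ j = 0" "rel_index y = a"
  shows "w = w $ y *s subconstituent_vec a"
proof -
  have "w $ j = (w $ y *s subconstituent_vec a) $ j" for j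
  proof (cases "rel_index j = a")
    case True
    then have "w $ j = w $ y" using subconstituent_constantD[OF assms(1)] assms(3) by metis
    with True show ?thesis by (simp add: subconstituent_vec_def)
  next
    case False
    with assms(2) show ?thesis by (simp add: subconstituent_vec_def)
  qed
  then show ?thesis unfolding vec_eq_iff by blast
qed

lemma orthogonal_supported_eq:
  assumes "orthogonal_to_constants w" "\<And>j. rel_index j \<noteq> a \<Longrightarrow> w $ j = 0"
    and a: "subconstituent a = {y, z}" "y \<noteq> z"
  shows "w = w $ y *s (axis y 1 - axis z 1)"
proof -
  have "w $ y + w $ z = 0"
    using sum_subconstituent_orthogonal[OF assms(1), of a] a by simp
  then have z: "w $ z = - w $ y" by (simp add: eq_neg_iff_add_eq_0 add.commute)
  have "w $ j = (w $ y *s (axis y 1 - axis z 1)) $ j" for j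
  proof (cases "j = y \<or> j = z")
    case True
    then show ?thesis using z a(2) by (auto simp: axis_def)
  next
    case False
    then have "rel_index j \<noteq> a" using a(1) unfolding subconstituent_def by blast
    then show ?thesis using False assms(2) by (simp add: axis_def)
  qed
  then show ?thesis unfolding vec_eq_iff by blast
qed

lemma orthogonal_nonzero_pair:
  assumes "card (subconstituent (rel_index i)) \<le> 2" "orthogonal_to_constants w" "w $ i \<noteq> 0"
  obtains i' where "i' \<noteq> i" "subconstituent (rel_index i) = {i, i'}"
proof (rule finite_set_card_le_2_cases[OF finite _ assms(1)])
  show "i \<in> subconstituent (rel_index i)" unfolding subconstituent_def by simp
next
  assume "subconstituent (rel_index i) = {i}"
  then show thesis using sum_subconstituent_orthogonal[OF assms(2), of "rel_index i"] assms(3) by simp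
next
  fix z assume "z \<noteq> i" "subconstituent (rel_index i) = {i, z}"
  then show thesis by (rule that)
qed

lemma dual_idem_mult_orthogonal:
  assumes "orthogonal_to_constants w" and b: "subconstituent b = {i, i'}" "i \<noteq> i'"
  shows "dual_idem R x b *v w = w $ i *s (axis i 1 - axis i' 1)"
proof -
  have "i \<in> subconstituent b" using b(1) by simp
  then have "rel_index i = b" "b \<le> d" unfolding mem_subconstituent by (auto intro: rel_index(1))
  have "orthogonal_to_constants (dual_idem R x b *v w)"
    using Ter_orthogonal_to_constants[OF dual_idem_in_Ter[OF \<open>b \<le> d\<close>] assms(1)] .
  then have "dual_idem R x b *v w = (dual_idem R x b *v w) $ i *s (axis i 1 - axis i' 1)"
    by (rule orthogonal_supported_eq[OF _ _ b]) (simp add: dual_idem_mult_vec[OF \<open>b \<le> d\<close>])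
  also have "(dual_idem R x b *v w) $ i = w $ i"
    using \<open>rel_index i = b\<close> by (simp add: dual_idem_mult_vec[OF \<open>b \<le> d\<close>])
  finally show ?thesis .
qed

subsection \<open>Non-semisimplicity when p divides a valency\<close>

lemma adj_matrix_mult_vec_base:
  assumes "b \<le> d"
  shows "(adj_matrix R b *v v) $ x = (\<Sum>j\<in>subconstituent b. v $ j)"
proof -
  have "{j. (x, j) \<in> R b} = subconstituent b"
    using rel_index_eq_iff[OF assms] unfolding subconstituent_def by blast
  then show ?thesis by (simp add: adj_matrix_mult_vec)
qed

lemma adj_matrix_dual_mult_axis:
  assumes "a \<le> d"
  shows "adj_matrix R (dual_index d R a) *v axis x 1 = (subconstituent_vec a :: 'f::field^'x)"
proof -
  have "(adj_matrix R (dual_index d R a) *v axis x 1) $ j = (subconstituent_vec a :: 'f^'x) $ j" for j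
  proof -
    have "(adj_matrix R (dual_index d R a) *v axis x 1) $ j
        = (\<Sum>l | (j, l) \<in> R (dual_index d R a). if l = x then 1 else (0::'f))"
      by (simp add: adj_matrix_mult_vec axis_def)
    also have "\<dots> = (if (j, x) \<in> R (dual_index d R a) then 1 else 0)"
      by simp
    also have "\<dots> = (subconstituent_vec a :: 'f^'x) $ j"
      using dual_index(2)[OF assms] rel_index_eq_iff[OF assms] by (simp add: subconstituent_vec_def)
    finally show ?thesis .
  qed
  then show ?thesis unfolding vec_eq_iff by blast
qed

definition transfer_matrix :: "nat \<Rightarrow> nat \<Rightarrow> 'f::field^'x^'x" where
  "transfer_matrix a b = adj_matrix R (dual_index d R a) ** dual_idem R x 0 ** adj_matrix R b"

lemma transfer_matrix_in_Ter: "a \<le> d \<Longrightarrow> b \<le> d \<Longrightarrow> transfer_matrix a b \<in> Ter"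
  unfolding transfer_matrix_def
  by (intro unital_algD(4)[OF unital_alg_Ter] adj_matrix_in_Ter dual_idem_in_Ter dual_index(1)) simp_all

lemma transfer_matrix_mult_vec:
  assumes "a \<le> d" "b \<le> d"
  shows "transfer_matrix a b *v v = (\<Sum>j\<in>subconstituent b. v $ j) *s subconstituent_vec a"
  unfolding transfer_matrix_def
  by (simp add: matrix_vector_mul_assoc[symmetric] dual_idem_0_mult_vec vector_scalar_commute
      adj_matrix_mult_vec_base[OF assms(2)] adj_matrix_dual_mult_axis[OF assms(1)])

lemma transfer_matrix_neq_0: "a \<le> d \<Longrightarrow> transfer_matrix a a \<noteq> (0::'f::field^'x^'x)"
proof
  assume "a \<le> d" and "transfer_matrix a a = (0::'f^'x^'x)"
  obtain y where "y \<in> subconstituent a" using subconstituent_nonempty[OF \<open>a \<le> d\<close>] by blast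
  then have "(\<Sum>j\<in>subconstituent a. (axis y 1 :: 'f^'x) $ j) = 1"
    by (simp add: axis_def)
  then have "transfer_matrix a a *v axis y 1 = (subconstituent_vec a :: 'f^'x)"
    by (simp add: transfer_matrix_mult_vec[OF \<open>a \<le> d\<close> \<open>a \<le> d\<close>])
  moreover have "(subconstituent_vec a :: 'f^'x) $ y = 1"
    using \<open>y \<in> subconstituent a\<close> by (simp add: subconstituent_vec_def mem_subconstituent)
  ultimately show False using \<open>transfer_matrix a a = 0\<close> by simp
qed

lemma transfer_matrix_nil:
  assumes "a \<le> d" and char: "of_nat (card (subconstituent a)) = (0::'f::field)" and "M \<in> Ter"
  shows "transfer_matrix a a ** M ** transfer_matrix a a = (0::'f^'x^'x)"
proof -
  obtain y where "rel_index y = a"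
    using subconstituent_nonempty[OF \<open>a \<le> d\<close>] unfolding mem_subconstituent[symmetric] by blast
  have "subconstituent_constant (M *v subconstituent_vec a)"
    by (rule Ter_subconstituent_constant[OF \<open>M \<in> Ter\<close> subconstituent_vec_constant])
  then have "(\<Sum>j\<in>subconstituent a. (M *v subconstituent_vec a) $ j)
      = of_nat (card (subconstituent a)) * (M *v subconstituent_vec a) $ y"
    using \<open>rel_index y = a\<close> by (rule sum_subconstituent_constant)
  then have "(\<Sum>j\<in>subconstituent a. (M *v subconstituent_vec a) $ j) = 0"
    using char by simp
  then show ?thesis
    by (simp add: matrix_eq matrix_vector_mul_assoc[symmetric] transfer_matrix_mult_vec[OF assms(1,1)]
        vector_scalar_commute)
qed

lemma not_semisimple_Ter:
  assumes "a \<le> d" "of_nat (card (subconstituent a)) = (0::'f::field)"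
  shows "\<not> semisimple_alg (Ter :: ('f^'x^'x) set) (mat 1)"
  using not_semisimple_if_nil[OF transfer_matrix_in_Ter[OF assms(1,1)] transfer_matrix_neq_0[OF assms(1)]]
    transfer_matrix_nil[OF assms] by blast

lemma unital_alg_corner_Ter: "a \<le> d \<Longrightarrow> unital_alg (corner Ter (dual_idem R x a)) (dual_idem R x a)"
  by (rule unital_alg_corner[OF unital_alg_Ter dual_idem_in_Ter dual_idem_idem])

lemma corner_subset_Ter: "a \<le> d \<Longrightarrow> corner Ter (dual_idem R x a) \<subseteq> Ter"
  by (rule corner_subset[OF unital_alg_Ter dual_idem_in_Ter])

lemma transfer_matrix_in_corner:
  assumes "a \<le> d"
  shows "transfer_matrix a a \<in> corner Ter (dual_idem R x a :: 'f::field^'x^'x)"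
proof -
  let ?E = "dual_idem R x a :: 'f^'x^'x"
  have "(\<Sum>j\<in>subconstituent a. (?E *v v) $ j) = (\<Sum>j\<in>subconstituent a. v $ j)" for v
    by (rule sum.cong) (simp_all add: dual_idem_mult_vec[OF assms] mem_subconstituent)
  moreover have "?E *v subconstituent_vec a = subconstituent_vec a"
    by (simp add: dual_idem_mult_subconstituent_vec[OF assms])
  ultimately have "?E ** transfer_matrix a a ** ?E = transfer_matrix a a"
    by (simp add: matrix_eq matrix_vector_mul_assoc[symmetric] transfer_matrix_mult_vec[OF assms assms]
        vector_scalar_commute)
  then show ?thesis using cornerI[OF transfer_matrix_in_Ter[OF assms assms]] by metis
qed

lemma not_semisimple_corner:
  assumes "a \<le> d" "of_nat (card (subconstituent a)) = (0::'f::field)"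
  shows "\<not> semisimple_alg (corner Ter (dual_idem R x a)) (dual_idem R x a :: 'f^'x^'x)"
  using not_semisimple_if_nil[OF transfer_matrix_in_corner[OF assms(1)] transfer_matrix_neq_0[OF assms(1)]]
    transfer_matrix_nil[OF assms] corner_subset_Ter[OF assms(1)] by blast

subsection \<open>Semisimplicity of p'-valenced quasi-thin schemes\<close>

lemma subconstituent_vec_simple_generator:
  assumes pv: "\<forall>b\<le>d. of_nat (card (subconstituent b)) \<noteq> (0::'f::field)" and "a \<le> d"
  shows "simple_generator Ter (subconstituent_vec a :: 'f^'x)"
proof (rule simple_generatorI[OF unital_alg_Ter])
  fix M :: "'f^'x^'x" assume "M \<in> Ter" and "M *v subconstituent_vec a \<noteq> 0"
  define w where "w = M *v subconstituent_vec a"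
  obtain i where "w $ i \<noteq> 0" using \<open>M *v subconstituent_vec a \<noteq> 0\<close> unfolding w_def vec_eq_iff by auto
  define b where "b = rel_index i"
  have "b \<le> d" unfolding b_def by (rule rel_index(1))
  have "subconstituent_constant w"
    unfolding w_def using Ter_subconstituent_constant[OF \<open>M \<in> Ter\<close> subconstituent_vec_constant] .
  then have "(\<Sum>j\<in>subconstituent b. w $ j) = of_nat (card (subconstituent b)) * w $ i"
    unfolding b_def by (rule sum_subconstituent_constant) simp
  then have "transfer_matrix a b *v w = (of_nat (card (subconstituent b)) * w $ i) *s subconstituent_vec a"
    by (simp only: transfer_matrix_mult_vec[OF \<open>a \<le> d\<close> \<open>b \<le> d\<close>])
  moreover have "of_nat (card (subconstituent b)) * w $ i \<noteq> 0"
    using pv \<open>b \<le> d\<close> \<open>w $ i \<noteq> 0\<close> by simp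
  ultimately show "\<exists>N\<in>Ter. \<exists>c. c \<noteq> 0 \<and> N *v (M *v subconstituent_vec a) = c *s subconstituent_vec a"
    using transfer_matrix_in_Ter[OF \<open>a \<le> d\<close> \<open>b \<le> d\<close>] unfolding w_def by blast
qed

text \<open>The standard bilinear form satisfies \<open>\<langle>r, N q\<rangle> = \<langle>transpose N r, q\<rangle>\<close>; both difference
  vectors have square norm 2, which identifies the scalar.\<close>
lemma transpose_maps_pair_back:
  fixes N :: "'f::field^'x^'x"
  assumes two: "(2::'f) \<noteq> 0" and "a \<le> d" "N \<in> Ter" "N ** dual_idem R x a = N"
    and a: "subconstituent a = {y, z}" "y \<noteq> z"
    and b: "rel_index i = rel_index i'" "i \<noteq> i'"
    and N: "N *v (axis y 1 - axis z 1) = \<mu> *s (axis i 1 - axis i' 1)"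
  shows "transpose N *v (axis i 1 - axis i' 1) = \<mu> *s (axis y 1 - axis z 1)"
proof -
  define g where "g = transpose N *v (axis i 1 - axis i' 1)"
  have "orthogonal_to_constants g"
    unfolding g_def using Ter_orthogonal_to_constants transpose_in_Ter[OF \<open>N \<in> Ter\<close>]
      axis_diff_orthogonal[OF b(1)] by blast
  moreover have "g $ j = 0" if "rel_index j \<noteq> a" for j
  proof -
    have "g = dual_idem R x a *v g"
      unfolding g_def using \<open>N ** dual_idem R x a = N\<close>
      by (metis matrix_transpose_mul matrix_vector_mul_assoc transpose_dual_idem)
    then show ?thesis using that dual_idem_mult_vec[OF \<open>a \<le> d\<close>] by metis
  qed
  ultimately have g: "g = g $ y *s (axis y 1 - axis z 1)"
    using orthogonal_supported_eq a by blast
  have sq: "(\<Sum>j\<in>UNIV. (axis y 1 - axis z 1) $ j * (g $ y *s (axis y 1 - axis z 1)) $ j) = g $ y * 2"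
    by (simp only: sum_mult_smult_self sum_axis_diff_square[OF a(2)])
  have "\<mu> * 2 = (\<Sum>j\<in>UNIV. (axis i 1 - axis i' 1) $ j * (N *v (axis y 1 - axis z 1)) $ j)"
    unfolding N sum_mult_smult_self sum_axis_diff_square[OF b(2)] ..
  also have "\<dots> = (\<Sum>j\<in>UNIV. g $ j * (axis y 1 - axis z 1) $ j)"
    unfolding g_def by (rule sum_mult_matrix_vector)
  also have "\<dots> = (\<Sum>j\<in>UNIV. (axis y 1 - axis z 1) $ j * g $ j)"
    by (intro sum.cong refl mult.commute)
  also have "\<dots> = g $ y * 2"
    using sq by (simp only: g[symmetric])
  finally have "g $ y = \<mu>" using two by simp
  then show ?thesis using g unfolding g_def by simp
qed

lemma axis_diff_simple_generator:
  assumes qt: "\<forall>b\<le>d. card (subconstituent b) \<le> 2" and two: "(2::'f::field) \<noteq> 0"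
    and "a \<le> d" and a: "subconstituent a = {y, z}" "y \<noteq> z"
  shows "simple_generator Ter (axis y 1 - axis z 1 :: 'f^'x)"
proof (rule simple_generatorI[OF unital_alg_Ter])
  let ?q = "axis y 1 - axis z 1 :: 'f^'x"
  let ?E = "dual_idem R x :: nat \<Rightarrow> 'f^'x^'x"
  fix M assume "M \<in> Ter" and "M *v ?q \<noteq> 0"
  define w where "w = M *v ?q"
  have "y \<in> subconstituent a" "z \<in> subconstituent a" using a(1) by simp_all
  then have yz: "rel_index y = a" "rel_index z = a" unfolding mem_subconstituent .
  then have "rel_index y = rel_index z" by simp
  then have w: "orthogonal_to_constants w"
    unfolding w_def by (rule Ter_orthogonal_to_constants[OF \<open>M \<in> Ter\<close> axis_diff_orthogonal])
  obtain i where "w $ i \<noteq> 0" using \<open>M *v ?q \<noteq> 0\<close> unfolding w_def vec_eq_iff by auto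
  define b where "b = rel_index i"
  have "b \<le> d" unfolding b_def by (rule rel_index(1))
  obtain i' where "i' \<noteq> i" and b: "subconstituent b = {i, i'}"
    using orthogonal_nonzero_pair[OF _ w \<open>w $ i \<noteq> 0\<close>] qt rel_index(1) unfolding b_def by blast
  have "i' \<in> subconstituent b" using b by simp
  then have "rel_index i' = rel_index i" unfolding mem_subconstituent b_def .
  define \<mu> where "\<mu> = w $ i"
  have Ew: "?E b *v w = \<mu> *s (axis i 1 - axis i' 1)"
    unfolding \<mu>_def using dual_idem_mult_orthogonal[OF w b \<open>i' \<noteq> i\<close>[symmetric]] .
  moreover have "?E a *v ?q = ?q"
    by (simp add: dual_idem_mult_axis_diff[OF \<open>a \<le> d\<close> yz])
  ultimately have N0: "(?E b ** M ** ?E a) *v ?q = \<mu> *s (axis i 1 - axis i' 1)"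
    unfolding w_def by (simp add: matrix_vector_mul_assoc[symmetric])
  have "?E b ** M ** ?E a \<in> Ter"
    by (intro unital_algD(4)[OF unital_alg_Ter] dual_idem_in_Ter \<open>M \<in> Ter\<close> \<open>a \<le> d\<close> \<open>b \<le> d\<close>)
  moreover have "?E b ** M ** ?E a ** ?E a = ?E b ** M ** ?E a"
    by (metis dual_idem_idem[OF \<open>a \<le> d\<close>] matrix_mul_assoc)
  ultimately have transposed: "transpose (?E b ** M ** ?E a) *v (axis i 1 - axis i' 1) = \<mu> *s ?q"
    using transpose_maps_pair_back[OF two \<open>a \<le> d\<close> _ _ a _ \<open>i' \<noteq> i\<close>[symmetric] N0]
      \<open>rel_index i' = rel_index i\<close> by simp
  have "(transpose (?E b ** M ** ?E a) ** ?E b) *v w = (\<mu> * \<mu>) *s ?q"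
    by (simp only: matrix_vector_mul_assoc[symmetric] Ew vector_scalar_commute transposed
        vector_smult_assoc)
  moreover have "transpose (?E b ** M ** ?E a) ** ?E b \<in> Ter"
    by (intro unital_algD(4)[OF unital_alg_Ter] transpose_in_Ter dual_idem_in_Ter
        \<open>?E b ** M ** ?E a \<in> Ter\<close> \<open>b \<le> d\<close>)
  moreover have "\<mu> * \<mu> \<noteq> 0" using \<open>w $ i \<noteq> 0\<close> unfolding \<mu>_def by simp
  ultimately show "\<exists>N\<in>Ter. \<exists>c. c \<noteq> 0 \<and> N *v (M *v ?q) = c *s ?q" unfolding w_def by blast
qed

lemma two_neq_zero_if_pair:
  assumes "\<forall>b\<le>d. of_nat (card (subconstituent b)) \<noteq> (0::'f::field)"
    and "subconstituent b = {y, z}" "y \<noteq> z"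
  shows "(2::'f) \<noteq> 0"
proof -
  have "y \<in> subconstituent b" using assms(2) by simp
  then have "b \<le> d" unfolding mem_subconstituent by (metis rel_index(1))
  moreover have "card (subconstituent b) = 2" using assms(2,3) by simp
  ultimately show ?thesis using assms(1) by (metis of_nat_numeral)
qed

lemma matrix_eq_0_if_annihilates_subconstituents:
  fixes M :: "'f::field^'x^'x"
  assumes qt: "\<forall>b\<le>d. card (subconstituent b) \<le> 2"
    and pv: "\<forall>b\<le>d. of_nat (card (subconstituent b)) \<noteq> (0::'f)"
    and vec: "\<And>b. b \<le> d \<Longrightarrow> M *v subconstituent_vec b = 0"
    and diff: "\<And>b y z. b \<le> d \<Longrightarrow> subconstituent b = {y, z} \<Longrightarrow> y \<noteq> z \<Longrightarrow>
      M *v (axis y 1 - axis z 1) = 0"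
  shows "M = 0"
proof (rule matrix_eq_0_if_axis)
  fix y
  define b where "b = rel_index y"
  have "b \<le> d" unfolding b_def by (rule rel_index(1))
  show "M *v axis y 1 = 0"
  proof (rule finite_set_card_le_2_cases[OF finite _ qt[rule_format, OF \<open>b \<le> d\<close>]])
    show "y \<in> subconstituent b" unfolding b_def mem_subconstituent ..
  next
    assume "subconstituent b = {y}"
    then have "subconstituent_vec b = (axis y 1 :: 'f^'x)"
      unfolding subconstituent_vec_def axis_def by (auto simp: vec_eq_iff simp flip: mem_subconstituent)
    then show ?thesis using vec[OF \<open>b \<le> d\<close>] by simp
  next
    fix z assume "z \<noteq> y" and b: "subconstituent b = {y, z}"
    then have "subconstituent_vec b = (axis y 1 + axis z 1 :: 'f^'x)"
      unfolding subconstituent_vec_def axis_def by (auto simp: vec_eq_iff simp flip: mem_subconstituent)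
    then have ey: "axis y 1 = inverse 2 *s (subconstituent_vec b + (axis y 1 - axis z 1) :: 'f^'x)"
      using two_neq_zero_if_pair[OF pv b \<open>z \<noteq> y\<close>[symmetric]] by (simp add: vec_eq_iff axis_def)
    have "M *v axis y 1 = M *v (inverse 2 *s (subconstituent_vec b + (axis y 1 - axis z 1)))"
      by (rule arg_cong[OF ey])
    also have "\<dots> = inverse 2 *s (M *v subconstituent_vec b + M *v (axis y 1 - axis z 1))"
      by (simp only: vector_scalar_commute matrix_vector_right_distrib)
    also have "\<dots> = 0"
      using vec[OF \<open>b \<le> d\<close>] diff[OF \<open>b \<le> d\<close> b \<open>z \<noteq> y\<close>[symmetric]] by simp
    finally show ?thesis .
  qed
qed

lemma semisimple_Ter:
  assumes qt: "\<forall>b\<le>d. card (subconstituent b) \<le> 2"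
    and pv: "\<forall>b\<le>d. of_nat (card (subconstituent b)) \<noteq> (0::'f::field)"
  shows "semisimple_alg (Ter :: ('f^'x^'x) set) (mat 1)"
proof (rule semisimple_algI[OF unital_alg_Ter])
  fix M :: "'f^'x^'x" assume M: "M \<in> jacobson_radical Ter"
  show "M = 0"
  proof (rule matrix_eq_0_if_annihilates_subconstituents[OF qt pv])
    fix b assume "b \<le> d"
    show "M *v subconstituent_vec b = 0"
      by (rule jacobson_radical_annihilates_simple_generator[OF unital_alg_Ter _
            subconstituent_vec_simple_generator[OF pv \<open>b \<le> d\<close>] M]) simp
  next
    fix b y z assume "b \<le> d" "subconstituent b = {y, z}" "y \<noteq> z"
    then show "M *v (axis y 1 - axis z 1) = 0"
      using jacobson_radical_annihilates_simple_generator[OF unital_alg_Ter _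
            axis_diff_simple_generator[OF qt two_neq_zero_if_pair[OF pv] \<open>b \<le> d\<close>] M]
      by simp
  qed
qed

lemma corner_mult_vec_supported:
  assumes "a \<le> d" "N \<in> corner Ter (dual_idem R x a)" "rel_index j \<noteq> a"
  shows "(N *v v) $ j = 0"
proof -
  have "N *v v = dual_idem R x a *v (N *v v)"
    using unital_algD(7)[OF unital_alg_corner_Ter[OF assms(1)] assms(2)] by (simp add: matrix_vector_mul_assoc)
  then show ?thesis using assms(3) dual_idem_mult_vec[OF assms(1)] by metis
qed

lemma corner_mult_vec_through_dual_idem:
  assumes "a \<le> d" "N \<in> corner Ter (dual_idem R x a)"
  shows "N *v v = N *v (dual_idem R x a *v v)"
  using unital_algD(8)[OF unital_alg_corner_Ter[OF assms(1)] assms(2)] by (simp add: matrix_vector_mul_assoc)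

lemma subconstituent_vec_corner_eigen:
  assumes "a \<le> d" "N \<in> corner Ter (dual_idem R x a)"
  shows "\<exists>c. N *v subconstituent_vec a = c *s subconstituent_vec a"
proof -
  obtain y where "rel_index y = a"
    using subconstituent_nonempty[OF assms(1)] unfolding mem_subconstituent[symmetric] by blast
  have "subconstituent_constant (N *v subconstituent_vec a)"
    using Ter_subconstituent_constant subconstituent_vec_constant corner_subset_Ter assms by blast
  then show ?thesis
    using constant_supported_eq[OF _ corner_mult_vec_supported[OF assms] \<open>rel_index y = a\<close>] by blast
qed

lemma axis_diff_corner_eigen:
  assumes "a \<le> d" "N \<in> corner Ter (dual_idem R x a)" "subconstituent a = {y, z}" "y \<noteq> z"
  shows "\<exists>c. N *v (axis y 1 - axis z 1) = c *s (axis y 1 - axis z 1)"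
proof -
  have "y \<in> subconstituent a" "z \<in> subconstituent a" using assms(3) by simp_all
  then have "rel_index y = rel_index z" unfolding mem_subconstituent by simp
  then have "orthogonal_to_constants (N *v (axis y 1 - axis z 1))"
    using Ter_orthogonal_to_constants axis_diff_orthogonal corner_subset_Ter assms(1,2) by blast
  then show ?thesis
    using orthogonal_supported_eq[OF _ corner_mult_vec_supported[OF assms(1,2)] assms(3,4)] by blast
qed

lemma semisimple_corner:
  assumes qt: "\<forall>b\<le>d. card (subconstituent b) \<le> 2"
    and pv: "\<forall>b\<le>d. of_nat (card (subconstituent b)) \<noteq> (0::'f::field)" and "a \<le> d"
  shows "semisimple_alg (corner Ter (dual_idem R x a)) (dual_idem R x a :: 'f^'x^'x)"
proof (rule semisimple_algI[OF unital_alg_corner_Ter[OF \<open>a \<le> d\<close>]])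
  let ?E = "dual_idem R x a :: 'f^'x^'x"
  note alg = unital_alg_corner_Ter[OF \<open>a \<le> d\<close>]
  fix M assume M: "M \<in> jacobson_radical (corner Ter ?E)"
  then have "M \<in> corner Ter ?E" unfolding jacobson_radical_def by blast
  have killed: "M *v v = 0" if "?E *v v = 0" for v
    using corner_mult_vec_through_dual_idem[OF \<open>a \<le> d\<close> \<open>M \<in> corner Ter ?E\<close>, of v] that by simp
  show "M = 0"
  proof (rule matrix_eq_0_if_annihilates_subconstituents[OF qt pv])
    fix b assume "b \<le> d"
    note Eu = dual_idem_mult_subconstituent_vec[OF \<open>a \<le> d\<close>, of b]
    show "M *v subconstituent_vec b = 0"
    proof (cases "b = a")
      case True
      then show ?thesis
        using jacobson_radical_annihilates_eigenvector[OF alg _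
            subconstituent_vec_corner_eigen[OF \<open>a \<le> d\<close>] M] Eu by simp
    qed (use Eu killed in simp)
  next
    fix b y z assume "b \<le> d" and b: "subconstituent b = {y, z}" "y \<noteq> z"
    have "y \<in> subconstituent b" "z \<in> subconstituent b" using b(1) by simp_all
    then have "rel_index y = b" "rel_index z = b" unfolding mem_subconstituent .
    note Eq = dual_idem_mult_axis_diff[OF \<open>a \<le> d\<close> this]
    show "M *v (axis y 1 - axis z 1) = 0"
    proof (cases "b = a")
      case True
      then show ?thesis
        using jacobson_radical_annihilates_eigenvector[OF alg _
            axis_diff_corner_eigen[OF \<open>a \<le> d\<close> _ _ b(2)] M] Eq b(1) by simp
    qed (use Eq killed in simp)
  qed
qed

end

theorem corollary5p9:
  fixes d :: nat and R :: "nat \<Rightarrow> ('x::finite \<times> 'x) set" and x :: 'x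
  assumes "is_scheme d R" and "quasi_thin d R"
  defines "T \<equiv> (terwilliger_alg d R x :: ('f::field ^'x^'x) set)"
  shows "(p'_valenced CHAR('f) d R \<longleftrightarrow> semisimple_alg T (mat 1)) \<and>
         (semisimple_alg T (mat 1) \<longleftrightarrow>
            (\<forall>a\<le>d. semisimple_alg {dual_idem R x a ** M ** dual_idem R x a | M. M \<in> T}
                                   (dual_idem R x a)))"
proof -
  interpret based_scheme d R x by unfold_locales (rule assms(1))
  have qt: "\<forall>b\<le>d. card (subconstituent b) \<le> 2"
    using assms(2) valency_eq_card_subconstituent unfolding quasi_thin_def by simp
  have pv: "p'_valenced CHAR('f) d R \<longleftrightarrow> (\<forall>b\<le>d. of_nat (card (subconstituent b)) \<noteq> (0::'f))"
    unfolding p'_valenced_def by (simp add: valency_eq_card_subconstituent of_nat_eq_0_iff_char_dvd)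
  have corners: "{dual_idem R x a ** M ** dual_idem R x a | M. M \<in> T} = corner T (dual_idem R x a)" for a
    unfolding corner_def ..
  show ?thesis
  proof (cases "\<forall>b\<le>d. of_nat (card (subconstituent b)) \<noteq> (0::'f)")
    case True
    have "semisimple_alg T (mat 1)"
      unfolding T_def by (rule semisimple_Ter[OF qt True])
    moreover have "\<forall>a\<le>d. semisimple_alg (corner T (dual_idem R x a)) (dual_idem R x a)"
      unfolding T_def using semisimple_corner[OF qt True] by blast
    ultimately show ?thesis unfolding corners pv using True by blast
  next
    case False
    then obtain a where a: "a \<le> d" "of_nat (card (subconstituent a)) = (0::'f)" by blast
    have "\<not> semisimple_alg T (mat 1)"
      unfolding T_def by (rule not_semisimple_Ter[OF a])
    moreover have "\<not> semisimple_alg (corner T (dual_idem R x a)) (dual_idem R x a)"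
      unfolding T_def by (rule not_semisimple_corner[OF a])
    ultimately show ?thesis unfolding corners pv using False a(1) by blast
  qed
qed

end
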